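(* Let $a<b$ be real numbers and define a sequence $(x_n)_{n\in\mathbb{N}}$ by, for $k\in\mathbb{N}$: $x_{4k-3}=a-2^{-k}$, $x_{4k-2}=b+2^{-k}$, $x_{4k-1}=a-3^{-k}$, $x_{4k}=b+3^{-k}$. Let $X=\{a,b\}\cup\{x_n:n\in\mathbb{N}\}\subset\mathbb{R}$ with the Euclidean metric, and define $T\colon X\to X$ by $T(x_n)=x_{n+1}$ for $n\geqslant1$, $T(a)=b$, $T(b)=a$. Then $T$ is continuous, $T$ is a graphic contraction of order $4$ (the defining inequality holds with any $\alpha\in[\tfrac12,1)$), $T$ is not a graphic contraction of order $1$, $2$ or $3$, and $a,b$ are periodic points of $T$ of prime period $2$.
   Context: Let $(X,d)$ be a nonempty metric space and $n\in\mathbb{N}$. A mapping $T\colon X\to X$ is a graphic contraction of order $n$ if there exists $\alpha\in(0,1)$ such that $d(T^n x,T^{2n}x)\leqslant \alpha\, d(x,T^n x)$ for all $x\in X$, where $T^k$ denotes the $k$-th iterate of $T$. A point $x$ is a periodic point of period $m$ if $T^m x=x$; the least such positive $m$ is its prime period. *)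

theory Defs
  imports "HOL-Analysis.Analysis"
begin

definition graphic_contraction :: "'a::metric_space set \<Rightarrow> ('a \<Rightarrow> 'a) \<Rightarrow> nat \<Rightarrow> bool" where
  "graphic_contraction X T n \<longleftrightarrow>
     (\<exists>\<alpha>::real. 0 < \<alpha> \<and> \<alpha> < 1 \<and>
        (\<forall>x\<in>X. dist ((T ^^ n) x) ((T ^^ (2 * n)) x) \<le> \<alpha> * dist x ((T ^^ n) x)))"

definition periodic_point :: "('a \<Rightarrow> 'a) \<Rightarrow> 'a \<Rightarrow> nat \<Rightarrow> bool" where
  "periodic_point T x m \<longleftrightarrow> (T ^^ m) x = x"

definition prime_period :: "('a \<Rightarrow> 'a) \<Rightarrow> 'a \<Rightarrow> nat \<Rightarrow> bool" where
  "prime_period T x m \<longleftrightarrow> 0 < m \<and> periodic_point T x m \<and>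
     (\<forall>j. 0 < j \<and> j < m \<longrightarrow> \<not> periodic_point T x j)"

text \<open>The sequence x_n (n \<ge> 1): with k = (n+3) div 4,
  x_{4k-3} = a - 2^-k, x_{4k-2} = b + 2^-k, x_{4k-1} = a - 3^-k, x_{4k} = b + 3^-k.
  The value at n = 0 is irrelevant and never used.\<close>
definition xseq :: "real \<Rightarrow> real \<Rightarrow> nat \<Rightarrow> real" where
  "xseq a b n = (let k = (n + 3) div 4 in
      if n mod 4 = 1 then a - (1/2) ^ k
      else if n mod 4 = 2 then b + (1/2) ^ k
      else if n mod 4 = 3 then a - (1/3) ^ k
      else b + (1/3) ^ k)"

end

theory Submission
  imports Defs
begin

(* x_n lies outside [a, b] next to a (n odd) or b (n even), at distance 2^-k or 3^-k from it,
   where k = (n+3) div 4.  Four steps of T return to the same side and multiply this offset by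
   1/2 or 1/3, which is the contraction of order 4.  The steps from b + 3^-k to a - 2^-(k+1)
   enlarge the offset, and around them the inequality fails for orders 1, 2 and 3.  T is
   continuous since every x_n is isolated in X, while near a and b an offset of at least 3^-k is
   mapped to one of at most 2^-k. *)

definition xseq_offset :: "nat \<Rightarrow> real" where
  "xseq_offset n = (if n mod 4 \<in> {1, 2} then 1/2 else 1/3) ^ ((n + 3) div 4)"

lemma xseq_eq_offset:
  "xseq a b n = (if odd n then a - xseq_offset n else b + xseq_offset n)"
proof -
  have "n mod 4 = 0 \<or> n mod 4 = 1 \<or> n mod 4 = 2 \<or> n mod 4 = 3" by presburger
  moreover have "odd n \<longleftrightarrow> n mod 4 = 1 \<or> n mod 4 = 3" by presburger
  ultimately show ?thesis
    unfolding xseq_def xseq_offset_def Let_def by auto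
qed

lemma xseq_offset_pos: "0 < xseq_offset n"
  by (simp add: xseq_offset_def)

lemma abs_xseq_offset [simp]: "\<bar>xseq_offset n\<bar> = xseq_offset n"
  using xseq_offset_pos by (simp add: abs_of_pos)

lemma xseq_offset_bounds:
  "(1/3) ^ ((n + 3) div 4) \<le> xseq_offset n" "xseq_offset n \<le> (1/2) ^ ((n + 3) div 4)"
  by (auto simp: xseq_offset_def intro: power_mono)

lemma xseq_offset_add4:
  "xseq_offset (n + 4) = (if n mod 4 \<in> {1, 2} then 1/2 else 1/3) * xseq_offset n"
proof -
  have "(n + 4) mod 4 = n mod 4" "(n + 4 + 3) div 4 = Suc ((n + 3) div 4)" by simp_all
  then show ?thesis by (simp add: xseq_offset_def)
qed

lemma xseq_offset_less:
  assumes "(1/2) ^ K < r" "4 * K < n"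
  shows "xseq_offset n < r"
proof -
  have "K \<le> (n + 3) div 4" using assms(2) by (simp add: less_eq_div_iff_mult_less_eq)
  then have "(1/2::real) ^ ((n + 3) div 4) \<le> (1/2) ^ K" by (rule power_decreasing) simp_all
  then show ?thesis using assms(1) xseq_offset_bounds(2)[of n] by linarith
qed

lemma xseq_offset_Suc_less:
  assumes "xseq_offset n < (1/3) ^ K"
  shows "xseq_offset (Suc n) < (1/2) ^ K"
proof -
  have "(1/3::real) ^ ((n + 3) div 4) < (1/3) ^ K"
    using assms xseq_offset_bounds(1)[of n] by linarith
  then have "K < (n + 3) div 4" by (simp add: power_strict_decreasing_iff)
  then have "K < (Suc n + 3) div 4" using div_le_mono[of "n + 3" "Suc n + 3" 4] by linarith
  then have "(1/2::real) ^ ((Suc n + 3) div 4) < (1/2) ^ K"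
    by (rule power_strict_decreasing) simp_all
  then show ?thesis using xseq_offset_bounds(2)[of "Suc n"] by linarith
qed

lemma dist_xseq_add4_add8:
  "dist (xseq a b (n + 4)) (xseq a b (n + 8)) \<le> 1/2 * dist (xseq a b n) (xseq a b (n + 4))"
proof -
  define q :: real where "q = (if n mod 4 \<in> {1, 2} then 1/2 else 1/3)"
  have "xseq_offset (n + 8) = q * xseq_offset (n + 4)"
    using xseq_offset_add4[of "n + 4"] by (simp add: q_def add.assoc)
  moreover have "xseq_offset (n + 4) = q * xseq_offset n"
    by (simp add: xseq_offset_add4 q_def)
  ultimately have "xseq a b (n + 4) - xseq a b (n + 8) = q * (xseq a b n - xseq a b (n + 4))"
    by (simp add: xseq_eq_offset algebra_simps)
  then have "dist (xseq a b (n + 4)) (xseq a b (n + 8)) = q * dist (xseq a b n) (xseq a b (n + 4))"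
    by (simp add: dist_real_def abs_mult q_def)
  also have "\<dots> \<le> 1/2 * dist (xseq a b n) (xseq a b (n + 4))"
    by (rule mult_right_mono) (simp_all add: q_def)
  finally show ?thesis .
qed

lemma not_islimpt_if_subset_finite_Un_closed:
  fixes x :: "'a::t1_space"
  assumes "S \<subseteq> F \<union> C" "finite F" "closed C" "x \<notin> C"
  shows "\<not> x islimpt S"
proof
  assume "x islimpt S"
  then have "x islimpt F \<union> C" using assms(1) by (rule islimpt_subset)
  then have "x islimpt C" using islimpt_finite[OF assms(2)] by (simp add: islimpt_Un)
  then show False using assms(3,4) by (simp add: closed_limpt)
qed

lemma graphic_contraction_dist_le:
  assumes "graphic_contraction X T n" "x \<in> X"
  shows "dist ((T ^^ n) x) ((T ^^ (2 * n)) x) \<le> dist x ((T ^^ n) x)"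
proof -
  obtain \<alpha> :: real where "0 < \<alpha>" "\<alpha> < 1"
    and "dist ((T ^^ n) x) ((T ^^ (2 * n)) x) \<le> \<alpha> * dist x ((T ^^ n) x)"
    using assms unfolding graphic_contraction_def by blast
  moreover have "\<alpha> * dist x ((T ^^ n) x) \<le> dist x ((T ^^ n) x)"
    using \<open>0 < \<alpha>\<close> \<open>\<alpha> < 1\<close> by (simp add: mult_left_le_one_le)
  ultimately show ?thesis by linarith
qed

locale xseq_map =
  fixes a b :: real and T :: "real \<Rightarrow> real" and X :: "real set"
  assumes a_less_b: "a < b"
    and X_def: "X = {a, b} \<union> {xseq a b n | n. n \<ge> 1}"
    and T_xseq: "\<And>n. n \<ge> 1 \<Longrightarrow> T (xseq a b n) = xseq a b (n + 1)"
    and T_a: "T a = b"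
    and T_b: "T b = a"
begin

lemma X_cases:
  assumes "y \<in> X"
  obtains "y = a" | "y = b" | n where "n \<ge> 1" "y = xseq a b n"
  using assms X_def by auto

lemma xseq_in_X: "n \<ge> 1 \<Longrightarrow> xseq a b n \<in> X"
  using X_def by auto

lemma funpow_T_xseq: "n \<ge> 1 \<Longrightarrow> (T ^^ k) (xseq a b n) = xseq a b (n + k)"
  by (induction k) (simp_all add: T_xseq)

lemma funpow_T_even:
  "(T ^^ (2 * k)) a = a" "(T ^^ (2 * k)) b = b"
  by (induction k) (simp_all add: T_a T_b)

lemma image_T_subset: "T ` X \<subseteq> X"
  using T_a T_b T_xseq xseq_in_X by (auto simp: X_def)

lemma prime_period_a: "prime_period T a 2" and prime_period_b: "prime_period T b 2"
  using funpow_T_even[of 1] a_less_b T_a T_b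
  by (auto simp: prime_period_def periodic_point_def less_2_cases_iff)

lemma dist_near_centre:
  assumes "c \<in> {a, b}" "y \<in> X" "y \<noteq> c" "dist y c < b - a"
  obtains n where "dist y c = xseq_offset n" "dist (T y) (T c) = xseq_offset (Suc n)"
  using assms(2)
proof (cases rule: X_cases)
  case (3 n)
  have Ty: "T y = xseq a b (Suc n)" using 3 T_xseq by simp
  have "0 < xseq_offset n" by (rule xseq_offset_pos)
  show ?thesis
  proof (cases "odd n")
    case True
    then have "c = a"
      using 3 assms \<open>0 < xseq_offset n\<close> by (auto simp: xseq_eq_offset dist_real_def)
    then show ?thesis
      using 3 Ty True T_a by (intro that[of n]) (simp_all add: xseq_eq_offset dist_real_def)
  next
    case False
    then have "c = b"
      using 3 assms \<open>0 < xseq_offset n\<close> by (auto simp: xseq_eq_offset dist_real_def)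
    then show ?thesis
      using 3 Ty False T_b by (intro that[of n]) (simp_all add: xseq_eq_offset dist_real_def)
  qed
qed (use assms a_less_b in \<open>auto simp: dist_real_def\<close>)

lemma continuous_at_centre:
  assumes "c \<in> {a, b}"
  shows "continuous (at c within X) T"
  unfolding continuous_within_eps_delta
proof (intro allI impI)
  fix e :: real assume "0 < e"
  then obtain K where K: "(1/2) ^ K < e" using real_arch_pow_inv[of e "1/2"] by auto
  have "dist (T y) (T c) < e" if y: "y \<in> X" "dist y c < min (b - a) ((1/3) ^ K)" for y
  proof (cases "y = c")
    case False
    have "dist y c < b - a" using y(2) by simp
    then obtain n where "dist y c = xseq_offset n" "dist (T y) (T c) = xseq_offset (Suc n)"
      using dist_near_centre[OF assms y(1) False] by blast
    then show ?thesis using y K xseq_offset_Suc_less[of n K] by simp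
  qed (use \<open>0 < e\<close> in simp)
  moreover have "0 < min (b - a) ((1/3) ^ K)" using a_less_b by simp
  ultimately show "\<exists>d>0. \<forall>y\<in>X. dist y c < d \<longrightarrow> dist (T y) (T c) < e"
    by blast
qed

lemma xseq_not_islimpt:
  assumes "n \<ge> 1"
  shows "\<not> xseq a b n islimpt X"
proof -
  define r where "r = xseq_offset n / 2"
  have "0 < r" by (simp add: r_def xseq_offset_pos)
  then obtain K where K: "(1/2) ^ K < r" using real_arch_pow_inv[of r "1/2"] by auto
  have "X \<subseteq> xseq a b ` {..4 * K} \<union> (cball a r \<union> cball b r)"
  proof
    fix y assume "y \<in> X"
    then show "y \<in> xseq a b ` {..4 * K} \<union> (cball a r \<union> cball b r)"
    proof (cases rule: X_cases)
      case (3 m)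
      show ?thesis
      proof (cases "m \<le> 4 * K")
        case False
        then have "xseq_offset m < r" using K xseq_offset_less by simp
        then show ?thesis using 3 by (auto simp: xseq_eq_offset dist_real_def)
      qed (use 3 in auto)
    qed (use \<open>0 < r\<close> in auto)
  qed
  moreover have "xseq a b n \<notin> cball a r \<union> cball b r"
    using a_less_b xseq_offset_pos[of n] by (auto simp: r_def xseq_eq_offset dist_real_def)
  ultimately show ?thesis
    by (intro not_islimpt_if_subset_finite_Un_closed) auto
qed

lemma continuous_on_T: "continuous_on X T"
  unfolding continuous_on_eq_continuous_within
proof
  fix x assume "x \<in> X"
  then show "continuous (at x within X) T"
    by (cases rule: X_cases)
      (auto intro: continuous_at_centre continuous_trivial_limit
        simp: trivial_limit_within xseq_not_islimpt)
qed

lemma dist_funpow_T_4_8: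
  assumes "1/2 \<le> \<alpha>" "x \<in> X"
  shows "dist ((T ^^ 4) x) ((T ^^ 8) x) \<le> \<alpha> * dist x ((T ^^ 4) x)"
  using assms(2)
proof (cases rule: X_cases)
  case (3 n)
  then have "dist ((T ^^ 4) x) ((T ^^ 8) x) \<le> 1/2 * dist x ((T ^^ 4) x)"
    using dist_xseq_add4_add8 by (simp add: funpow_T_xseq)
  also have "\<dots> \<le> \<alpha> * dist x ((T ^^ 4) x)"
    using assms(1) by (rule mult_right_mono) simp
  finally show ?thesis .
qed (use funpow_T_even[of 2] funpow_T_even[of 4] in simp_all)

lemma not_graphic_contraction_if_expands:
  assumes "n \<ge> 1"
    and "dist (xseq a b n) (xseq a b (n + m)) < dist (xseq a b (n + m)) (xseq a b (n + 2 * m))"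
  shows "\<not> graphic_contraction X T m"
proof
  assume "graphic_contraction X T m"
  from graphic_contraction_dist_le[OF this xseq_in_X[OF assms(1)]] show False
    using assms(2) by (simp add: funpow_T_xseq[OF assms(1)])
qed

lemma not_graphic_contraction_1_2_3:
  "\<not> graphic_contraction X T 1" "\<not> graphic_contraction X T 2"
  "\<not> graphic_contraction X T 3"
proof -
  have "xseq a b 7 = a - 1/9" "xseq a b 8 = b + 1/9" "xseq a b 9 = a - 1/8"
    "xseq a b 11 = a - 1/27" "xseq a b 15 = a - 1/81" "xseq a b 18 = b + 1/32"
    "xseq a b 21 = a - 1/64"
    by (simp_all add: xseq_def power_numeral_reduce)
  then show "\<not> graphic_contraction X T 1" "\<not> graphic_contraction X T 2"
    "\<not> graphic_contraction X T 3"
    using a_less_b not_graphic_contraction_if_expands[of 7 1]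
      not_graphic_contraction_if_expands[of 7 2] not_graphic_contraction_if_expands[of 15 3]
    by (simp_all add: dist_real_def)
qed

end

theorem mainTheorem3:
  fixes a b :: real and T :: "real \<Rightarrow> real" and X :: "real set"
  assumes "a < b"
    and X_def: "X = {a, b} \<union> {xseq a b n | n. n \<ge> 1}"
    and T_seq: "\<And>n. n \<ge> 1 \<Longrightarrow> T (xseq a b n) = xseq a b (n + 1)"
    and T_a: "T a = b"
    and T_b: "T b = a"
  shows "T ` X \<subseteq> X
    \<and> continuous_on X T
    \<and> graphic_contraction X T 4
    \<and> (\<forall>\<alpha>::real. 1/2 \<le> \<alpha> \<and> \<alpha> < 1 \<longrightarrow>
           (\<forall>x\<in>X. dist ((T ^^ 4) x) ((T ^^ 8) x) \<le> \<alpha> * dist x ((T ^^ 4) x)))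
    \<and> \<not> graphic_contraction X T 1
    \<and> \<not> graphic_contraction X T 2
    \<and> \<not> graphic_contraction X T 3
    \<and> prime_period T a 2
    \<and> prime_period T b 2"
proof -
  interpret xseq_map a b T X
    using assms by unfold_locales
  have "graphic_contraction X T 4"
    unfolding graphic_contraction_def
    by (rule exI[of _ "1/2"]) (use dist_funpow_T_4_8[of "1/2"] in auto)
  then show ?thesis
    using image_T_subset continuous_on_T dist_funpow_T_4_8 not_graphic_contraction_1_2_3
      prime_period_a prime_period_b
    by blast
qed

end
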